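(* For every integer $v\ge 1$, with $\partial_z=d/dz$, $$\prod_{n=1}^{v-1}\left(\partial_z^2+4n^2\right)\csc^2 z=(2v-1)!\,\csc^{2v}z .$$ (For $v=1$ the product is empty and the identity reads $\csc^2 z=\csc^2 z$.)
   Context: The identity is between functions of a real (or complex) variable $z$ away from the zeros of $\sin z$. The operators $\partial_z^2+4n^2$ commute, so the order of the product is irrelevant. *)

theory Defs
  imports "HOL-Analysis.Analysis"
begin

definition shift_op :: "nat \<Rightarrow> (real \<Rightarrow> real) \<Rightarrow> (real \<Rightarrow> real)" where
  "shift_op n f = (\<lambda>z. deriv (deriv f) z + 4 * (real n)^2 * f z)"

fun prod_op :: "nat \<Rightarrow> (real \<Rightarrow> real) \<Rightarrow> (real \<Rightarrow> real)" where
  "prod_op 0 f = f"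
| "prod_op (Suc m) f = shift_op (Suc m) (prod_op m f)"

definition cosec :: "real \<Rightarrow> real" where
  "cosec z = 1 / sin z"

end

theory Submission
  imports Defs
begin

text \<open>
  Differentiating twice, \<open>(csc^N)'' = N(N+1) csc^(N+2) - N^2 csc^N\<close>, so
  \<open>(\<partial>^2 + N^2) csc^N = N(N+1) csc^(N+2)\<close>. Applying the factors in the order
  \<open>n = 1, 2, \<dots>\<close>, the factor \<open>\<partial>^2 + 4n^2\<close> meets exactly \<open>csc^(2n)\<close>, and the
  coefficients \<open>2n(2n+1)\<close> accumulate to \<open>(2v-1)!\<close>.
\<close>

lemma open_sin_nonzero: "open {x::real. sin x \<noteq> 0}"
  by (intro open_Collect_neq continuous_intros)

lemma deriv_cong_open:
  assumes "open S" "x \<in> S" "\<And>y. y \<in> S \<Longrightarrow> f y = g y"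
  shows "deriv f x = deriv g x"
  by (intro deriv_cong_ev refl eventually_mono[OF eventually_nhds_in_open[OF assms(1,2)]] assms(3))

lemma sin_mult_cosec: "sin x \<noteq> 0 \<Longrightarrow> sin x * cosec x = 1"
  by (simp add: cosec_def)

lemma has_real_derivative_cosec:
  assumes "sin x \<noteq> 0"
  shows "(cosec has_real_derivative - cos x * (cosec x)^2) (at x)"
proof -
  have "((\<lambda>x. inverse (sin x)) has_real_derivative - (inverse (sin x) * cos x * inverse (sin x))) (at x)"
    using assms by (auto intro!: derivative_eq_intros)
  moreover have "cosec = (\<lambda>x. inverse (sin x))"
    by (simp add: fun_eq_iff cosec_def inverse_eq_divide)
  ultimately show ?thesis
    by (simp add: power2_eq_square cosec_def inverse_eq_divide)
qed

lemma has_real_derivative_cosec_power: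
  assumes "sin x \<noteq> 0"
  shows "((\<lambda>x. c * cosec x ^ N) has_real_derivative - c * real N * cos x * cosec x ^ Suc N) (at x)"
proof -
  have "((\<lambda>x. c * cosec x ^ N) has_real_derivative
          c * (real N * (- cos x * (cosec x)^2 * cosec x ^ (N - Suc 0)))) (at x)"
    by (intro DERIV_cmult DERIV_power has_real_derivative_cosec assms)
  moreover have "c * (real N * (- cos x * (cosec x)^2 * cosec x ^ (N - Suc 0)))
      = - c * real N * cos x * cosec x ^ Suc N"
    by (cases N) (simp_all add: power2_eq_square)
  ultimately show ?thesis by (simp only:)
qed

lemma has_real_derivative_cosec_power_deriv:
  assumes "sin x \<noteq> 0"
  shows "((\<lambda>x. - c * real N * cos x * cosec x ^ Suc N) has_real_derivative
           c * real N * (real N + 1) * cosec x ^ (N + 2) - c * (real N)^2 * cosec x ^ N) (at x)"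
proof -
  have "((\<lambda>x. (- c * real N * cos x) * cosec x ^ Suc N) has_real_derivative
           (- c * real N * - sin x) * cosec x ^ Suc N
           + (1 + real N) * (- cos x * (cosec x)^2 * cosec x ^ N) * (- c * real N * cos x)) (at x)"
    by (intro DERIV_mult DERIV_cmult DERIV_cos DERIV_power_Suc has_real_derivative_cosec assms)
  moreover have "(- c * real N * - sin x) * cosec x ^ Suc N
           + (1 + real N) * (- cos x * (cosec x)^2 * cosec x ^ N) * (- c * real N * cos x)
      = c * real N * cosec x ^ N * (sin x * cosec x)
        + c * real N * (real N + 1) * cosec x ^ N * ((cos x)^2 * (cosec x)^2)"
    by (simp add: algebra_simps power2_eq_square)
  also have "(cos x)^2 * (cosec x)^2 = (cosec x)^2 - (sin x * cosec x)^2"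
    by (simp add: cos_squared_eq algebra_simps power_mult_distrib)
  also have "sin x * cosec x = 1"
    using assms by (rule sin_mult_cosec)
  also have "c * real N * cosec x ^ N * 1 + c * real N * (real N + 1) * cosec x ^ N * ((cosec x)^2 - 1^2)
      = c * real N * (real N + 1) * cosec x ^ (N + 2) - c * (real N)^2 * cosec x ^ N"
    by (simp add: algebra_simps power2_eq_square)
  ultimately show ?thesis by (simp only:)
qed

lemma deriv_deriv_cosec_power:
  assumes "sin z \<noteq> 0"
  shows "deriv (deriv (\<lambda>x. c * cosec x ^ N)) z
           = c * real N * (real N + 1) * cosec z ^ (N + 2) - c * (real N)^2 * cosec z ^ N"
proof -
  have "deriv (deriv (\<lambda>x. c * cosec x ^ N)) z = deriv (\<lambda>x. - c * real N * cos x * cosec x ^ Suc N) z"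
    by (intro deriv_cong_open[OF open_sin_nonzero] DERIV_imp_deriv has_real_derivative_cosec_power)
       (use assms in auto)
  also have "\<dots> = c * real N * (real N + 1) * cosec z ^ (N + 2) - c * (real N)^2 * cosec z ^ N"
    by (intro DERIV_imp_deriv has_real_derivative_cosec_power_deriv assms)
  finally show ?thesis .
qed

lemma shift_op_cosec_power:
  assumes "sin z \<noteq> 0"
  shows "shift_op n (\<lambda>x. c * cosec x ^ (2 * n)) z = c * (2 * real n * (2 * real n + 1)) * cosec z ^ (2 * n + 2)"
  using deriv_deriv_cosec_power[OF assms, of c "2 * n"]
  by (simp add: shift_op_def algebra_simps power2_eq_square)

text \<open>
  Off the zeros of \<open>sin\<close> the iterates agree with \<open>c csc\<^sup>N\<close> only, not globally
  (\<open>deriv\<close> takes junk values at the poles), so the induction needs this local congruence.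
\<close>
lemma shift_op_cong_open:
  assumes "open S" "z \<in> S" "\<And>x. x \<in> S \<Longrightarrow> f x = g x"
  shows "shift_op n f z = shift_op n g z"
proof -
  have "deriv f x = deriv g x" if "x \<in> S" for x
    using assms(1) that assms(3) by (rule deriv_cong_open)
  then have "deriv (deriv f) z = deriv (deriv g) z"
    using assms(1,2) by (rule deriv_cong_open[rotated 2])
  with assms(2,3) show ?thesis by (simp add: shift_op_def)
qed

lemma prod_op_cosec_squared:
  "sin z \<noteq> 0 \<Longrightarrow> prod_op k (\<lambda>x. (cosec x)^2) z = fact (2 * k + 1) * cosec z ^ (2 * k + 2)"
proof (induction k arbitrary: z)
  case 0
  then show ?case by (simp add: power2_eq_square)
next
  case (Suc k)
  have "prod_op (Suc k) (\<lambda>x. (cosec x)^2) z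
      = shift_op (Suc k) (\<lambda>x. fact (2 * k + 1) * cosec x ^ (2 * Suc k)) z"
    using Suc by (auto intro: shift_op_cong_open[OF open_sin_nonzero])
  also have "\<dots> = fact (2 * k + 1) * (2 * real (Suc k) * (2 * real (Suc k) + 1)) * cosec z ^ (2 * Suc k + 2)"
    using Suc.prems by (rule shift_op_cosec_power)
  also have "fact (2 * k + 1) * (2 * real (Suc k) * (2 * real (Suc k) + 1)) = (fact (2 * Suc k + 1) :: real)"
    by (simp add: fact_Suc algebra_simps)
  finally show ?case .
qed

theorem mainTheorem1:
  fixes m :: nat and z :: real
  assumes "m \<ge> 1" and "sin z \<noteq> 0"
  shows "prod_op (m - 1) (\<lambda>x. (cosec x)^2) z = fact (2*m - 1) * (cosec z)^(2*m)"
proof -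
  obtain k where "m = Suc k"
    using assms(1) by (cases m) auto
  then show ?thesis
    using prod_op_cosec_squared[OF assms(2), of k] by simp
qed

end
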